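(* There exists $h_*\in(0,1)$ with the following property. Let $t\ge0$, $R>1$, and let $h$ be a minimizer of $E$ subject to $h(1)=h(R)=1$, with $h(r)\ge h_*$ for all $r\in[1,R]$. Then for every $x$ with $1\le|x|\le R$ and every $\mathbf V\in S_0$, \[ \varphi(\mathbf V):=\frac25v_0^2+v_3^2+v_4^2-\frac{\sqrt6}{2}\mathrm{tr}\,\mathbf V^3+\frac38|\mathbf V|^4+5\left(2(\mathbf H(x)\cdot\mathbf V)+|\mathbf V|^2\right)^2\ge0, \] with equality if and only if $\mathbf V=0$; here $v_0,\dots,v_4$ are the components of $\mathbf V$ in the basis $\mathbf E,\mathbf F,\mathbf G,\mathbf X,\mathbf Y$ at $x$.
   Context: $S_0$: real symmetric traceless $3\times3$ matrices; $\mathbf A\cdot\mathbf B=A_{ij}B_{ij}$, $|\mathbf V|^2=\mathbf V\cdot\mathbf V$. $h_+=\frac{3+\sqrt{9+8t}}{4}$; $E[h]=\int_1^R\frac{r^2}{2}(h')^2+3h^2+r^2[\frac t8(1-h^2)^2+\frac{h_+}{8}(1+3h^4-4h^3)]dr$. With $r=|x|$, $\hat x=x/r$: $\mathbf H(x)=\sqrt{3/2}\,h(r)(\hat x\otimes\hat x-\mathbf I/3)$. In spherical coordinates $(r,\theta,\phi)$: $\mathbf n=\hat x$, $\mathbf m=(\cos\theta\cos\phi,\cos\theta\sin\phi,-\sin\theta)$, $\mathbf p=(-\sin\phi,\cos\phi,0)$; $\mathbf E=\mathbf n\otimes\mathbf n-\mathbf I/3$, $\mathbf F=\mathbf n\otimes\mathbf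 m+\mathbf m\otimes\mathbf n$, $\mathbf G=\mathbf n\otimes\mathbf p+\mathbf p\otimes\mathbf n$, $\mathbf X=\mathbf m\otimes\mathbf p+\mathbf p\otimes\mathbf m$, $\mathbf Y=\mathbf m\otimes\mathbf m-\mathbf p\otimes\mathbf p$; $\mathbf V=v_0\mathbf E+v_1\mathbf F+v_2\mathbf G+v_3\mathbf X+v_4\mathbf Y$. *)

theory Defs
  imports "HOL-Analysis.Analysis"
begin

type_synonym mat3 = "real^3^3"

definition hplus :: "real \<Rightarrow> real" where
  "hplus t = (3 + sqrt (9 + 8 * t)) / 4"

definition energy_density :: "real \<Rightarrow> (real \<Rightarrow> real) \<Rightarrow> real \<Rightarrow> real" where
  "energy_density t h r =
     r^2 / 2 * (deriv h r)^2 + 3 * (h r)^2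
     + r^2 * (t / 8 * (1 - (h r)^2)^2 + hplus t / 8 * (1 + 3 * (h r)^4 - 4 * (h r)^3))"

definition energy :: "real \<Rightarrow> real \<Rightarrow> (real \<Rightarrow> real) \<Rightarrow> real" where
  "energy t R h = integral {1..R} (energy_density t h)"

definition admissible :: "real \<Rightarrow> (real \<Rightarrow> real) \<Rightarrow> bool" where
  "admissible R h \<longleftrightarrow> h C1_differentiable_on {1..R} \<and> h 1 = 1 \<and> h R = 1"

definition is_minimizer :: "real \<Rightarrow> real \<Rightarrow> (real \<Rightarrow> real) \<Rightarrow> bool" where
  "is_minimizer t R h \<longleftrightarrow> admissible R h \<and>
     (\<forall>g. admissible R g \<longrightarrow> energy t R h \<le> energy t R g)"

definition S0 :: "mat3 set" where
  "S0 = {V. transpose V = V \<and> trace V = 0}"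

definition mdot :: "mat3 \<Rightarrow> mat3 \<Rightarrow> real" where
  "mdot A B = (\<Sum>i\<in>UNIV. \<Sum>j\<in>UNIV. A $ i $ j * B $ i $ j)"

definition outer :: "real^3 \<Rightarrow> real^3 \<Rightarrow> mat3" where
  "outer u w = (\<chi> i j. u $ i * w $ j)"

definition vec3 :: "real \<Rightarrow> real \<Rightarrow> real \<Rightarrow> real^3" where
  "vec3 a b c = vector [a, b, c]"

definition nvec :: "real \<Rightarrow> real \<Rightarrow> real^3" where
  "nvec \<theta> \<phi> = vec3 (sin \<theta> * cos \<phi>) (sin \<theta> * sin \<phi>) (cos \<theta>)"
definition mvec :: "real \<Rightarrow> real \<Rightarrow> real^3" where
  "mvec \<theta> \<phi> = vec3 (cos \<theta> * cos \<phi>) (cos \<theta> * sin \<phi>) (- sin \<theta>)"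
definition pvec :: "real \<Rightarrow> real \<Rightarrow> real^3" where
  "pvec \<theta> \<phi> = vec3 (- sin \<phi>) (cos \<phi>) 0"

definition Emat :: "real \<Rightarrow> real \<Rightarrow> mat3" where
  "Emat \<theta> \<phi> = outer (nvec \<theta> \<phi>) (nvec \<theta> \<phi>) - (1/3) *\<^sub>R mat 1"
definition Fmat :: "real \<Rightarrow> real \<Rightarrow> mat3" where
  "Fmat \<theta> \<phi> = outer (nvec \<theta> \<phi>) (mvec \<theta> \<phi>) + outer (mvec \<theta> \<phi>) (nvec \<theta> \<phi>)"
definition Gmat :: "real \<Rightarrow> real \<Rightarrow> mat3" where
  "Gmat \<theta> \<phi> = outer (nvec \<theta> \<phi>) (pvec \<theta> \<phi>) + outer (pvec \<theta> \<phi>) (nvec \<theta> \<phi>)"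
definition Xmat :: "real \<Rightarrow> real \<Rightarrow> mat3" where
  "Xmat \<theta> \<phi> = outer (mvec \<theta> \<phi>) (pvec \<theta> \<phi>) + outer (pvec \<theta> \<phi>) (mvec \<theta> \<phi>)"
definition Ymat :: "real \<Rightarrow> real \<Rightarrow> mat3" where
  "Ymat \<theta> \<phi> = outer (mvec \<theta> \<phi>) (mvec \<theta> \<phi>) - outer (pvec \<theta> \<phi>) (pvec \<theta> \<phi>)"

text \<open>H(x) at x = r n(theta,phi), r = |x|: sqrt(3/2) h(r) (xhat xhat - I/3).\<close>
definition Hmat :: "(real \<Rightarrow> real) \<Rightarrow> real \<Rightarrow> real \<Rightarrow> real \<Rightarrow> mat3" where
  "Hmat h r \<theta> \<phi> = (sqrt (3/2) * h r) *\<^sub>R Emat \<theta> \<phi>"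

definition phi_fun :: "mat3 \<Rightarrow> mat3 \<Rightarrow> real \<Rightarrow> real \<Rightarrow> real \<Rightarrow> real" where
  "phi_fun H V v0 v3 v4 =
     2/5 * v0^2 + v3^2 + v4^2 - sqrt 6 / 2 * trace (V ** V ** V)
     + 3/8 * (mdot V V)^2 + 5 * (2 * mdot H V + mdot V V)^2"

end

theory Submission
  imports Defs
begin

text \<open>In the moving frame \<open>(m, p, n)\<close> at \<open>x\<close> the tensor \<open>H(x)\<close> is
\<open>sqrt(3/2) s E\<close> with \<open>s = h(|x|)\<close>, and all terms of \<open>\<phi>\<close> are orthogonally invariant, so
\<open>\<phi>\<close> is a quartic polynomial in \<open>s, v\<^sub>0, \<dots>, v\<^sub>4\<close>. Put \<open>u = v\<^sub>0/\<surd>6\<close>,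
\<open>r = |(v\<^sub>3, v\<^sub>4)|/\<surd>6\<close>, \<open>\<rho> = v\<^sub>1\<^sup>2 + v\<^sub>2\<^sup>2\<close>. The only term not expressible in
\<open>u, r, \<rho>\<close> is the cubic coupling \<open>v\<^sub>4(v\<^sub>1\<^sup>2 - v\<^sub>2\<^sup>2) + 2v\<^sub>1v\<^sub>2v\<^sub>3\<close>, the real part of
\<open>(v\<^sub>4 - i v\<^sub>3)(v\<^sub>1 + i v\<^sub>2)\<^sup>2\<close>, hence at most \<open>\<surd>6 r \<rho>\<close>. What is left is a polynomial
in \<open>s, u, r, \<rho>\<close> which, for \<open>1/2 \<le> s \<le> 1\<close>, dominates \<open>(u\<^sup>2 + r\<^sup>2 + \<rho>\<^sup>2)/20\<close>; this is
certified by sums of squares. Finally a minimizer satisfies \<open>h \<le> 1\<close>: otherwise composing it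
with the \<open>C\<^sup>1\<close> cap \<open>y \<mapsto> 2 - 1/y\<close> (for \<open>y > 1\<close>) lowers both the gradient and the
potential part of the energy, strictly where \<open>h > 1\<close>. Hence \<open>h\<^sub>* = 1/2\<close> works.\<close>

section \<open>Orthogonal invariance and the moving frame\<close>

lemma orthogonal_conj_mult:
  fixes Q A B :: "'a::comm_ring_1^'n^'n"
  assumes "orthogonal_matrix Q"
  shows "(Q ** A ** transpose Q) ** (Q ** B ** transpose Q) = Q ** (A ** B) ** transpose Q"
  using assms unfolding orthogonal_matrix_def by (metis matrix_mul_assoc matrix_mul_lid)

lemma orthogonal_conj_trace:
  fixes Q A :: "'a::comm_ring_1^'n^'n"
  assumes "orthogonal_matrix Q"
  shows "trace (Q ** A ** transpose Q) = trace A"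
  using assms unfolding orthogonal_matrix_def by (metis matrix_mul_assoc matrix_mul_lid trace_mul_sym)

lemma orthogonal_conj_eq_0_iff:
  fixes Q A :: "'a::comm_ring_1^'n^'n"
  assumes "orthogonal_matrix Q"
  shows "Q ** A ** transpose Q = 0 \<longleftrightarrow> A = 0"
proof
  assume "Q ** A ** transpose Q = 0"
  then have "transpose Q ** (Q ** A ** transpose Q) ** Q = 0" by simp
  with assms show "A = 0"
    unfolding orthogonal_matrix_def by (metis matrix_mul_assoc matrix_mul_lid matrix_mul_rid)
qed simp

lemma mdot_eq_trace: "mdot A B = trace (transpose A ** B)"
  unfolding mdot_def trace_def matrix_matrix_mult_def transpose_def by (simp add: sum_3)

lemma mdot_scaleR_left: "mdot (c *\<^sub>R A) B = c * mdot A B"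
  unfolding mdot_def by (simp add: sum_distrib_left mult.assoc)

lemma mdot_orthogonal_conj:
  assumes "orthogonal_matrix Q"
  shows "mdot (Q ** A ** transpose Q) (Q ** B ** transpose Q) = mdot A B"
proof -
  have "transpose (Q ** A ** transpose Q) = Q ** transpose A ** transpose Q"
    by (simp add: matrix_transpose_mul matrix_mul_assoc)
  then show ?thesis
    by (simp add: mdot_eq_trace orthogonal_conj_mult[OF assms] orthogonal_conj_trace[OF assms])
qed

definition frame_matrix :: "real \<Rightarrow> real \<Rightarrow> mat3" where
  "frame_matrix \<theta> \<phi> =
     (\<chi> i j. (if j = 1 then mvec \<theta> \<phi> else if j = 2 then pvec \<theta> \<phi> else nvec \<theta> \<phi>) $ i)"

lemma orthogonal_frame_matrix: "orthogonal_matrix (frame_matrix \<theta> \<phi>)"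
  unfolding orthogonal_matrix vec_eq_iff forall_3 frame_matrix_def matrix_matrix_mult_def
    transpose_def mat_def
  by (simp add: sum_3 mvec_def pvec_def nvec_def vec3_def)
    (intro conjI; insert sin_cos_squared_add[of \<theta>] sin_cos_squared_add[of \<phi>]; algebra)

text \<open>The matrix of \<open>V\<close> in the orthonormal basis \<open>(m, p, n)\<close>: in it \<open>E\<close> becomes
\<open>diag(-1/3, -1/3, 2/3)\<close>, \<open>Y\<close> becomes \<open>diag(1, -1, 0)\<close>, and \<open>F\<close>, \<open>G\<close>, \<open>X\<close> the symmetric
units at the positions \<open>(1,3)\<close>, \<open>(2,3)\<close>, \<open>(1,2)\<close>.\<close>

definition frame_coords :: "real \<Rightarrow> real \<Rightarrow> real \<Rightarrow> real \<Rightarrow> real \<Rightarrow> mat3" where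
  "frame_coords v0 v1 v2 v3 v4 =
     (\<chi> i j. if i = 1 \<and> j = 1 then - v0 / 3 + v4 else if i = 2 \<and> j = 2 then - v0 / 3 - v4
       else if i = 3 \<and> j = 3 then 2 * v0 / 3 else if i \<noteq> 3 \<and> j \<noteq> 3 then v3
       else if i = 1 \<or> j = 1 then v1 else v2)"

lemma frame_combination_eq:
  "v0 *\<^sub>R Emat \<theta> \<phi> + v1 *\<^sub>R Fmat \<theta> \<phi> + v2 *\<^sub>R Gmat \<theta> \<phi> + v3 *\<^sub>R Xmat \<theta> \<phi> + v4 *\<^sub>R Ymat \<theta> \<phi>
     = frame_matrix \<theta> \<phi> ** frame_coords v0 v1 v2 v3 v4 ** transpose (frame_matrix \<theta> \<phi>)"
  unfolding vec_eq_iff forall_3 frame_matrix_def matrix_matrix_mult_def transpose_def mat_def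
    frame_coords_def Emat_def Fmat_def Gmat_def Xmat_def Ymat_def outer_def
  by (simp add: sum_3 mvec_def pvec_def nvec_def vec3_def)
    (intro conjI; insert sin_cos_squared_add[of \<theta>] sin_cos_squared_add[of \<phi>];
      ((simp add: field_simps; fail) | algebra))

lemma frame_coords_eq_0_iff:
  "frame_coords v0 v1 v2 v3 v4 = 0 \<longleftrightarrow> v0 = 0 \<and> v1 = 0 \<and> v2 = 0 \<and> v3 = 0 \<and> v4 = 0"
  unfolding frame_coords_def vec_eq_iff forall_3 by auto

lemma frame_combination_eq_0_iff:
  "v0 *\<^sub>R Emat \<theta> \<phi> + v1 *\<^sub>R Fmat \<theta> \<phi> + v2 *\<^sub>R Gmat \<theta> \<phi> + v3 *\<^sub>R Xmat \<theta> \<phi> + v4 *\<^sub>R Ymat \<theta> \<phi> = 0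
     \<longleftrightarrow> v0 = 0 \<and> v1 = 0 \<and> v2 = 0 \<and> v3 = 0 \<and> v4 = 0"
  by (simp add: frame_combination_eq orthogonal_conj_eq_0_iff orthogonal_frame_matrix
      frame_coords_eq_0_iff)

lemma frame_combination_invariants:
  assumes "V = v0 *\<^sub>R Emat \<theta> \<phi> + v1 *\<^sub>R Fmat \<theta> \<phi> + v2 *\<^sub>R Gmat \<theta> \<phi>
             + v3 *\<^sub>R Xmat \<theta> \<phi> + v4 *\<^sub>R Ymat \<theta> \<phi>"
  shows "trace (V ** V ** V) = 2/9 * v0^3 - 2 * v0 * (v3^2 + v4^2) + v0 * (v1^2 + v2^2)
           + 3 * (v4 * (v1^2 - v2^2) + 2 * v1 * v2 * v3)"
    and "mdot V V = 2/3 * v0^2 + 2 * (v1^2 + v2^2 + v3^2 + v4^2)"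
    and "mdot (Emat \<theta> \<phi>) V = 2/3 * v0"
proof -
  let ?Q = "frame_matrix \<theta> \<phi>" and ?D = "frame_coords v0 v1 v2 v3 v4"
  have V: "V = ?Q ** ?D ** transpose ?Q" using assms by (simp add: frame_combination_eq)
  have E: "Emat \<theta> \<phi> = ?Q ** frame_coords 1 0 0 0 0 ** transpose ?Q"
    using frame_combination_eq[of 1 \<theta> \<phi> 0 0 0 0] by simp
  have "trace (V ** V ** V) = trace (?D ** ?D ** ?D)"
    by (simp add: V orthogonal_frame_matrix orthogonal_conj_mult orthogonal_conj_trace)
  then show "trace (V ** V ** V) = 2/9 * v0^3 - 2 * v0 * (v3^2 + v4^2) + v0 * (v1^2 + v2^2)
           + 3 * (v4 * (v1^2 - v2^2) + 2 * v1 * v2 * v3)"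
    unfolding trace_def matrix_matrix_mult_def frame_coords_def
    by (simp add: sum_3 field_simps power3_eq_cube power2_eq_square)
  have "mdot V V = mdot ?D ?D" by (simp add: V orthogonal_frame_matrix mdot_orthogonal_conj)
  then show "mdot V V = 2/3 * v0^2 + 2 * (v1^2 + v2^2 + v3^2 + v4^2)"
    unfolding mdot_def frame_coords_def by (simp add: sum_3 field_simps power2_eq_square)
  have "mdot (Emat \<theta> \<phi>) V = mdot (frame_coords 1 0 0 0 0) ?D"
    by (simp add: V E orthogonal_frame_matrix mdot_orthogonal_conj)
  then show "mdot (Emat \<theta> \<phi>) V = 2/3 * v0"
    unfolding mdot_def frame_coords_def by (simp add: sum_3 field_simps)
qed

section \<open>The reduced quartic\<close>

definition reduced_norm :: "real \<Rightarrow> real \<Rightarrow> real \<Rightarrow> real" where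
  "reduced_norm u r \<rho> = 4 * u^2 + 2 * \<rho> + 12 * r^2"

definition reduced_bulk :: "real \<Rightarrow> real \<Rightarrow> real \<Rightarrow> real" where
  "reduced_bulk u r \<rho> = 12/5 * u^2 + 6 * r^2 - 4 * u^3 + 36 * u * r^2 - 3 * u * \<rho> - 9 * r * \<rho>
     + 3/8 * (reduced_norm u r \<rho>)^2"

definition reduced_phi :: "real \<Rightarrow> real \<Rightarrow> real \<Rightarrow> real \<Rightarrow> real" where
  "reduced_phi s u r \<rho> = reduced_bulk u r \<rho> + 5 * (4 * s * u + reduced_norm u r \<rho>)^2"

lemma phi_coords_eq:
  fixes s v0 v1 v2 v3 v4 :: real
  defines "r \<equiv> sqrt (v3^2 + v4^2) / sqrt 6"
  shows "2/5 * v0^2 + v3^2 + v4^2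
      - sqrt 6 / 2 * (2/9 * v0^3 - 2 * v0 * (v3^2 + v4^2) + v0 * (v1^2 + v2^2)
           + 3 * (v4 * (v1^2 - v2^2) + 2 * v1 * v2 * v3))
      + 3/8 * (2/3 * v0^2 + 2 * (v1^2 + v2^2 + v3^2 + v4^2))^2
      + 5 * (2 * (sqrt (3/2) * s * (2/3 * v0)) + (2/3 * v0^2 + 2 * (v1^2 + v2^2 + v3^2 + v4^2)))^2
    = reduced_phi s (v0 / sqrt 6) r (v1^2 + v2^2)
      + 3 * sqrt 6 / 2 * (sqrt (v3^2 + v4^2) * (v1^2 + v2^2) - (v4 * (v1^2 - v2^2) + 2 * v1 * v2 * v3))"
proof -
  define k where "k = sqrt 6"
  define u where "u = v0 / k"
  have kk: "k * k = 6" by (simp add: k_def)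
  have v0: "v0 = k * u" by (simp add: u_def k_def)
  have sqrt_w: "sqrt (v3^2 + v4^2) = k * r" by (simp add: r_def k_def)
  have sqrt_32: "sqrt (3/2) = k / 2"
    using real_sqrt_mult[of 4 "3/2"] by (simp add: k_def)
  have kk_assoc: "k * (k * x) = 6 * x" for x using kk by (simp flip: mult.assoc)
  have r2: "r^2 = (v3^2 + v4^2) / 6" by (simp add: r_def power_divide)
  show ?thesis
    unfolding reduced_phi_def reduced_bulk_def reduced_norm_def k_def[symmetric] u_def[symmetric]
    unfolding sqrt_w sqrt_32 v0 r2
    by (simp add: algebra_simps power2_eq_square power3_eq_cube kk kk_assoc; simp add: field_simps)
qed

lemma cubic_coupling_le:
  fixes v1 v2 v3 v4 :: real
  shows "v4 * (v1^2 - v2^2) + 2 * v1 * v2 * v3 \<le> sqrt (v3^2 + v4^2) * (v1^2 + v2^2)"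
proof -
  have "(v4 * (v1^2 - v2^2) + 2 * v1 * v2 * v3)^2 + (v3 * (v1^2 - v2^2) - 2 * v1 * v2 * v4)^2
      = (v3^2 + v4^2) * (v1^2 + v2^2)^2"
    by (simp add: algebra_simps power2_eq_square)
  then have "(v4 * (v1^2 - v2^2) + 2 * v1 * v2 * v3)^2 \<le> (sqrt (v3^2 + v4^2) * (v1^2 + v2^2))^2"
    by (simp add: power_mult_distrib) (metis le_add_same_cancel1 zero_le_power2)
  then show ?thesis
    by (rule power2_le_imp_le) simp
qed

text \<open>The sum-of-squares certificates below were found numerically. Their trailing terms are
products of nonnegative quantities; in \<open>reduced_bulk_ge\<close> these include the side condition
\<open>- 4 u - reduced_norm u r \<rho> \<ge> 0\<close>, written in \<open>x = - u\<close>.\<close>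

lemma reduced_phi_half_ge:
  fixes u r \<rho> :: real
  assumes "0 \<le> u" "0 \<le> r" "0 \<le> \<rho>"
  shows "(u^2 + r^2 + \<rho>^2) / 20 \<le> reduced_phi (1/2) u r \<rho>"
proof -
  have "reduced_phi (1/2) u r \<rho> - (u^2 + r^2 + \<rho>^2) / 20 =
    (429/20) * (\<rho> + (-30/143) * r + (846403/165000) * r^2 + (31205893/42900000) * u + (-25637/275000) * u * r + (70551467/42900000) * u^2)^2 +
    (14317/2860) * (r + (-187184907/143170000) * r^2 + (-265434049/1431700000) * u + (6803823/286340000) * u * r + (-600103781/1431700000) * u^2)^2 +
    (10571979729589781/1073775000000000) * ((121972751518143355/42287918918359124) * r^2 + u + (28426831323644259/84575837836718248) * u * r + (37091642487150781/42287918918359124) * u^2)^2 +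
    (18464296422608307330538260209/169151675673436496000000000) * (r^2 + (-2679725068157339893654279107/184642964226083073305382602090) * u * r + (5587189966130553520768894755/18464296422608307330538260209) * u^2)^2 +
    (37507113812233800309303315272932501167/1846429642260830733053826020900000000) * (u * r + (-2350079061004555575206901242801576770/37507113812233800309303315272932501167) * u^2)^2 +
    (288969164848960607512299494036747170692352429/37507113812233800309303315272932501167000000) * (u^2)^2 +
    (5794107/1000000) * (u * \<rho>) +
    (8402873/1000000) * (u * r) +
    (491287/500000) * (u^2) +
    (1896761/50000) * (r^2 * \<rho>) +
    (5925729/100000) * (r^3) +
    (999843/250000) * (u * r * \<rho>) +
    (55622669/1000000) * (u * r^2) +
    (15448533/1000000) * (u^2 * \<rho>) +
    (15332393/1000000) * (u^2 * r) +
    (1326103/200000) * (u^3) +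
    (9940083/1000000) * (r^4) +
    (4905287/1000000) * (u * r^3) +
    (11088077/1000000) * (u^2 * r^2) +
    (175041/40000) * (u^3 * r) +
    (876953/500000) * (u^4)"
    (is "_ = ?sos")
    unfolding reduced_phi_def reduced_bulk_def reduced_norm_def
    by (simp add: algebra_simps power2_eq_square power3_eq_cube power4_eq_xxxx; simp add: field_simps)
  moreover have "0 \<le> ?sos"
    using assms by (intro add_nonneg_nonneg mult_nonneg_nonneg; simp)
  ultimately show ?thesis
    by linarith
qed

lemma reduced_phi_one_ge:
  fixes u r \<rho> :: real
  assumes "u \<le> 0" "0 \<le> r" "0 \<le> \<rho>"
  shows "(u^2 + r^2 + \<rho>^2) / 20 \<le> reduced_phi 1 u r \<rho>"
proof -
  define x where "x = - u"
  have x: "0 \<le> x" "u = - x" using assms(1) by (simp_all add: x_def)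
  have "reduced_phi 1 (- x) r \<rho> - (x^2 + r^2 + \<rho>^2) / 20 =
    (429/20) * (\<rho> + (-30/143) * r + (19674649/3575000) * r^2 + (-70/39) * x + (1144023/572000) * x^2)^2 +
    (14317/2860) * (r + (3541436677/715850000) * r^2 + (-23100/14317) * x + (-159493477/143170000) * x * r + (38789747/357925000) * x^2)^2 +
    (185197/859020) * ((-5020983027/1851970000) * r^2 + x + (-23199708183/9259850000) * x * r + (-211531689/370394000) * x^2)^2 +
    (1076281657868327/4629925000000000) * (r^2 + (887229348339830/1076281657868327) * x * r + (202367625831547/1076281657868327) * x^2)^2 +
    (805927767029276262914574763/26907041446708175000000000) * (x * r + (11135580122861434234317895/1611855534058552525829149526) * x^2)^2 +
    (9315202892629802169482450650332449319/161185553405855252582914952600000000000) * (x^2)^2 +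
    (5476053/250000) * (r^2 * \<rho>) +
    (1/500000) * (r^3) +
    (7931/40000) * (x^2 * \<rho>) +
    (51865707/1000000) * (x * r^3) +
    (3/1000000) * (x^2 * r^2) +
    (10587/100000) * (x^3 * r)"
    (is "_ = ?sos")
    unfolding reduced_phi_def reduced_bulk_def reduced_norm_def
    by (simp add: algebra_simps power2_eq_square power3_eq_cube power4_eq_xxxx; simp add: field_simps)
  moreover have "0 \<le> ?sos"
    using assms x by (intro add_nonneg_nonneg mult_nonneg_nonneg; simp add: reduced_norm_def)
  ultimately have "(x^2 + r^2 + \<rho>^2) / 20 \<le> reduced_phi 1 (- x) r \<rho>"
    by linarith
  then show ?thesis
    using x by simp
qed

lemma reduced_bulk_ge:
  fixes u r \<rho> :: real
  assumes "u \<le> 0" "0 \<le> r" "0 \<le> \<rho>" "reduced_norm u r \<rho> \<le> - 4 * u"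
  shows "(u^2 + r^2 + \<rho>^2) / 20 \<le> reduced_bulk u r \<rho>"
proof -
  define x where "x = - u"
  have x: "0 \<le> x" "u = - x" using assms(1) by (simp_all add: x_def)
  have "reduced_bulk (- x) r \<rho> - (x^2 + r^2 + \<rho>^2) / 20 =
    (99807/25000) * (\<rho> + (-4499867/3992280) * r + (299047/234840) * r^2 + (-26057/99807) * x + (6002077/3992280) * x * r + (876868/499035) * x^2)^2 +
    (3505262982311/3992280000000) * (r + (22879605194173/3505262982311) * r^2 + (-4691183323240/3505262982311) * x + (-594654576841/3505262982311) * x * r + (-1840213710512/3505262982311) * x^2)^2 +
    (35422087418013/70105259646220) * ((-7704359292198907693/1771104370900650000) * r^2 + x + (-993946069201578859/221388046362581250) * x * r + (-73481398922030083/221388046362581250) * x^2)^2 +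
    (2148840957019768063313041/1771104370900650000000000) * (r^2 + (2118034186143420073235864/2148840957019768063313041) * x * r + (156578550088923939587768/2148840957019768063313041) * x^2)^2 +
    (24298433775401522618199289837109/1074420478509884031656520500000) * (x * r + (2318478430881086371534328906959/97193735101606090472797159348436) * x^2)^2 +
    (4717863677127446837759190541542910499/38877494040642436189118863739374400000) * (x^2)^2 +
    (4*x - (4*x^2+2*\<rho>+12*r^2)) * ((437893/500000) * x^2) +
    (4*x - (4*x^2+2*\<rho>+12*r^2)) * ((54613/1000000) * r^2) +
    (4*x - (4*x^2+2*\<rho>+12*r^2)) * ((54613/1000000) * \<rho>^2) +
    (54613/500000) * (\<rho>^3) +
    (5798827/250000) * (r^2 * \<rho>) +
    (163839/250000) * (r^2 * \<rho>^2) +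
    (163839/125000) * (x * r^2 * \<rho>) +
    (18277829/500000) * (x * r^3) +
    (54613/250000) * (x^2 * \<rho>^2) +
    (54613/125000) * (x^3 * \<rho>) +
    (1/1000000) * (x^3 * r) +
    (63557/50000) * ((4*x - (4*x^2+2*\<rho>+12*r^2)) * \<rho>) +
    (133/1000000) * ((4*x - (4*x^2+2*\<rho>+12*r^2)) * r) +
    (54613/500000) * ((4*x - (4*x^2+2*\<rho>+12*r^2)) * x * \<rho>) +
    (6002077/1000000) * ((4*x - (4*x^2+2*\<rho>+12*r^2)) * x * r) +
    (81533/100000) * ((4*x - (4*x^2+2*\<rho>+12*r^2)) * x^2)"
    (is "_ = ?sos")
    unfolding reduced_phi_def reduced_bulk_def reduced_norm_def
    by (simp add: algebra_simps power2_eq_square power3_eq_cube power4_eq_xxxx; simp add: field_simps)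
  moreover have "0 \<le> ?sos"
    using assms x by (intro add_nonneg_nonneg mult_nonneg_nonneg; simp add: reduced_norm_def)
  ultimately have "(x^2 + r^2 + \<rho>^2) / 20 \<le> reduced_bulk (- x) r \<rho>"
    by linarith
  then show ?thesis
    using x by simp
qed

text \<open>For \<open>u \<ge> 0\<close> the coupling square is smallest at \<open>s = 1/2\<close>, for \<open>u \<le> 0\<close> at \<open>s = 1\<close> as long
as its base stays nonnegative; otherwise it is simply dropped.\<close>

lemma reduced_phi_ge:
  assumes "1/2 \<le> s" "s \<le> 1" "0 \<le> r" "0 \<le> \<rho>"
  shows "(u^2 + r^2 + \<rho>^2) / 20 \<le> reduced_phi s u r \<rho>"
proof -
  let ?N = "reduced_norm u r \<rho>"
  have N: "0 \<le> ?N" using assms by (simp add: reduced_norm_def)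
  consider "0 \<le> u" | "u \<le> 0" "- 4 * u \<le> ?N" | "u \<le> 0" "?N \<le> - 4 * u" by linarith
  then show ?thesis
  proof cases
    case 1
    have "4 * (1/2) * u \<le> 4 * s * u" using 1 assms(1) by (simp add: mult_right_mono)
    then have "(4 * (1/2) * u + ?N)^2 \<le> (4 * s * u + ?N)^2" using 1 N by (intro power_mono) auto
    then show ?thesis
      using reduced_phi_half_ge[OF 1 assms(3,4)] unfolding reduced_phi_def by linarith
  next
    case 2
    have "4 * 1 * u \<le> 4 * s * u" using 2 assms(2) by (simp add: mult_right_mono_neg)
    then have "(4 * 1 * u + ?N)^2 \<le> (4 * s * u + ?N)^2" using 2 by (intro power_mono) auto
    then show ?thesis
      using reduced_phi_one_ge[OF 2(1) assms(3,4)] unfolding reduced_phi_def by linarith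
  next
    case 3
    have "0 \<le> 5 * (4 * s * u + ?N)^2" by simp
    then show ?thesis
      using reduced_bulk_ge[OF 3(1) assms(3,4) 3(2)] unfolding reduced_phi_def by linarith
  qed
qed

section \<open>Minimizers are bounded by one\<close>

lemma integral_less_of_le_of_less_at:
  fixes f g :: "real \<Rightarrow> real"
  assumes "continuous_on {a..b} f" "continuous_on {a..b} g" "a < b"
    and "\<And>x. x \<in> {a..b} \<Longrightarrow> f x \<le> g x" "c \<in> {a..b}" "f c < g c"
  shows "integral {a..b} f < integral {a..b} g"
proof -
  have cont: "continuous_on {a..b} (\<lambda>x. g x - f x)"
    using assms(1,2) by (intro continuous_intros)
  have "integral {a..b} (\<lambda>x. g x - f x) \<noteq> 0"
    using integral_eq_0_iff[OF cont assms(3)] assms(4-6) by fastforce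
  moreover have "integral {a..b} (\<lambda>x. g x - f x) \<ge> 0"
    using assms(4) by (intro integral_nonneg integrable_continuous_interval cont) auto
  moreover have "integral {a..b} (\<lambda>x. g x - f x) = integral {a..b} g - integral {a..b} f"
    using assms(1,2) by (intro integral_diff integrable_continuous_interval)
  ultimately show ?thesis by linarith
qed

lemma C1_differentiable_on_compose_real:
  fixes f g :: "real \<Rightarrow> real"
  assumes "f C1_differentiable_on S"
    and g: "\<And>y. (g has_real_derivative g' y) (at y)" "continuous_on UNIV g'"
  shows "(g \<circ> f) C1_differentiable_on S"
proof -
  obtain D where D: "\<And>x. x \<in> S \<Longrightarrow> (f has_real_derivative D x) (at x)"
    and "continuous_on S D"
    using assms(1) unfolding C1_differentiable_on_def has_real_derivative_iff_has_vector_derivative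
    by blast
  have "continuous_on S f"
    using D by (meson DERIV_isCont continuous_at_imp_continuous_on)
  then have "continuous_on S (\<lambda>x. g' (f x) * D x)"
    using continuous_on_compose2[OF g(2)] \<open>continuous_on S D\<close> by (intro continuous_on_mult) auto
  moreover have "((g \<circ> f) has_real_derivative g' (f x) * D x) (at x)" if "x \<in> S" for x
    using DERIV_chain[OF g(1) D[OF that]] by (simp add: mult.commute)
  ultimately show ?thesis
    unfolding C1_differentiable_on_def has_real_derivative_iff_has_vector_derivative
    by (intro exI[of _ "\<lambda>x. g' (f x) * D x"]) blast
qed

definition smooth_cap :: "real \<Rightarrow> real" where
  "smooth_cap y = (if y \<le> 1 then y else 2 - 1 / y)"

lemma smooth_cap_has_real_derivative:
  "(smooth_cap has_real_derivative 1 / (max y 1)^2) (at y)"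
proof -
  have "((\<lambda>x. if x \<in> {..1} then x else 2 - 1 / x) has_vector_derivative
      (if y \<in> {..1} then 1 else 1 / y^2)) (at y within UNIV)"
  proof (rule has_vector_derivative_If_within_closures[where T = "{1<..}"])
    show "((\<lambda>x. x) has_vector_derivative 1) (at y within {..1} \<union> closure {..1} \<inter> closure {1<..})"
      by (rule has_vector_derivative_id)
    assume "y \<in> {1<..} \<union> closure {..1} \<inter> closure {1<..}"
    then have "((\<lambda>x. 2 - 1 / x) has_real_derivative 1 / y^2) (at y)"
      by (auto intro!: derivative_eq_intros simp: power2_eq_square)
    then show "((\<lambda>x. 2 - 1 / x) has_vector_derivative 1 / y^2)
        (at y within {1<..} \<union> closure {..1} \<inter> closure {1<..})"
      by (simp add: has_real_derivative_iff_has_vector_derivative has_vector_derivative_at_within)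
  qed auto
  moreover have "1 / (max y 1)^2 = (if y \<le> 1 then 1 else 1 / y^2)"
    by (simp add: max_def)
  ultimately show ?thesis
    by (simp add: smooth_cap_def[abs_def] has_real_derivative_iff_has_vector_derivative)
qed

lemma smooth_cap_between:
  assumes "1 < y"
  shows "1 < smooth_cap y \<and> smooth_cap y < y"
proof -
  have "0 < (y - 1)^2" using assms by simp
  then have "2 * y - 1 < y * y" by (simp add: power2_eq_square algebra_simps)
  then have "2 - 1 / y < y" using assms by (simp add: field_simps)
  then show ?thesis using assms by (simp add: smooth_cap_def)
qed

lemma C1_differentiable_on_smooth_cap_compose:
  assumes "f C1_differentiable_on S"
  shows "(smooth_cap \<circ> f) C1_differentiable_on S"
proof (rule C1_differentiable_on_compose_real[OF assms smooth_cap_has_real_derivative])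
  show "continuous_on UNIV (\<lambda>y::real. 1 / (max y 1)^2)"
    by (intro continuous_intros) (auto simp: max_def)
qed

definition energy_potential :: "real \<Rightarrow> real \<Rightarrow> real \<Rightarrow> real" where
  "energy_potential t r y =
     3 * y^2 + r^2 * (t / 8 * (1 - y^2)^2 + hplus t / 8 * (1 + 3 * y^4 - 4 * y^3))"

lemma energy_potential_strict_mono:
  assumes "0 \<le> t" "1 \<le> a" "a < b"
  shows "energy_potential t r a < energy_potential t r b"
proof -
  have "0 \<le> hplus t" using assms(1) by (simp add: hplus_def)
  have quartic: "1 + 3 * y^4 - 4 * y^3 = (y - 1)^2 * (3 * y^2 + 2 * y + 1)" for y :: real
    by (simp add: algebra_simps power2_eq_square power3_eq_cube power4_eq_xxxx)
  have sq: "a^2 \<le> b^2" "1 \<le> a^2" using assms(2,3) by (simp_all add: power_mono one_le_power)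
  then have "(1 - a^2)^2 \<le> (1 - b^2)^2"
    by (simp add: power2_commute[of 1] power_mono)
  moreover have "1 + 3 * a^4 - 4 * a^3 \<le> 1 + 3 * b^4 - 4 * b^3"
    unfolding quartic using assms sq by (intro mult_mono power_mono add_mono) auto
  ultimately have "r^2 * (t / 8 * (1 - a^2)^2 + hplus t / 8 * (1 + 3 * a^4 - 4 * a^3))
      \<le> r^2 * (t / 8 * (1 - b^2)^2 + hplus t / 8 * (1 + 3 * b^4 - 4 * b^3))"
    using assms(1) \<open>0 \<le> hplus t\<close> by (intro add_mono mult_left_mono) auto
  moreover have "3 * a^2 < 3 * b^2" using assms(2,3) by (simp add: power_strict_mono)
  ultimately show ?thesis
    unfolding energy_potential_def by linarith
qed

lemma continuous_on_energy_potential [continuous_intros]: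
  "continuous_on S f \<Longrightarrow> continuous_on S (\<lambda>x. energy_potential t x (f x))"
  unfolding energy_potential_def by (intro continuous_intros)

lemma energy_potential_smooth_cap_le:
  "0 \<le> t \<Longrightarrow> energy_potential t r (smooth_cap y) \<le> energy_potential t r y"
  using energy_potential_strict_mono[of t "smooth_cap y" y r] smooth_cap_between[of y]
  by (cases "y \<le> 1") (auto simp: smooth_cap_def)

lemma energy_eq_integral:
  assumes "\<And>x. x \<in> {1..R} \<Longrightarrow> (h has_real_derivative D x) (at x)"
  shows "energy t R h = integral {1..R} (\<lambda>x. x^2 / 2 * (D x)^2 + energy_potential t x (h x))"
  unfolding energy_def energy_density_def energy_potential_def
  by (rule integral_cong) (simp add: DERIV_imp_deriv[OF assms])

lemma smooth_cap_slope_sq_le: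
  fixes y d :: real
  shows "(1 / (max y 1)^2 * d)^2 \<le> d^2"
proof -
  have "1 \<le> (max y 1)^2" by (simp add: one_le_power)
  then have "(1 / (max y 1)^2)^2 \<le> 1" by (simp add: power_le_one)
  from mult_right_mono[OF this zero_le_power2[of d]] show ?thesis
    by (simp only: power_mult_distrib)
qed

lemma energy_integrand_smooth_cap:
  assumes "0 \<le> t"
  shows "x^2 / 2 * (1 / (max y 1)^2 * d)^2 + energy_potential t x (smooth_cap y)
           \<le> x^2 / 2 * d^2 + energy_potential t x y"
    and "1 < y \<Longrightarrow> x^2 / 2 * (1 / (max y 1)^2 * d)^2 + energy_potential t x (smooth_cap y)
           < x^2 / 2 * d^2 + energy_potential t x y"
proof -
  have slope: "x^2 / 2 * (1 / (max y 1)^2 * d)^2 \<le> x^2 / 2 * d^2"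
    by (rule mult_left_mono[OF smooth_cap_slope_sq_le]) simp
  then show "x^2 / 2 * (1 / (max y 1)^2 * d)^2 + energy_potential t x (smooth_cap y)
           \<le> x^2 / 2 * d^2 + energy_potential t x y"
    by (rule add_mono[OF _ energy_potential_smooth_cap_le[OF assms]])
  assume "1 < y"
  then have "energy_potential t x (smooth_cap y) < energy_potential t x y"
    using energy_potential_strict_mono[OF assms] smooth_cap_between[of y] by simp
  with slope show "x^2 / 2 * (1 / (max y 1)^2 * d)^2 + energy_potential t x (smooth_cap y)
           < x^2 / 2 * d^2 + energy_potential t x y"
    by linarith
qed

lemma energy_smooth_cap_less:
  assumes "0 \<le> t" "1 < R" "admissible R h" "r \<in> {1..R}" "1 < h r"
  shows "energy t R (smooth_cap \<circ> h) < energy t R h"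
proof -
  obtain D where deriv: "\<And>x. x \<in> {1..R} \<Longrightarrow> (h has_real_derivative D x) (at x)"
    and "continuous_on {1..R} D"
    using assms(3) unfolding admissible_def C1_differentiable_on_def
      has_real_derivative_iff_has_vector_derivative by blast
  moreover have "continuous_on {1..R} h"
    using deriv by (meson DERIV_isCont continuous_at_imp_continuous_on)
  moreover have "continuous_on UNIV smooth_cap"
    using smooth_cap_has_real_derivative by (meson DERIV_isCont continuous_at_imp_continuous_on)
  moreover have "max y 1 \<noteq> (0::real)" for y by linarith
  ultimately have cont: "continuous_on {1..R} (\<lambda>x. x^2 / 2 * (D x)^2 + energy_potential t x (h x))"
    "continuous_on {1..R} (\<lambda>x. x^2 / 2 * (1 / (max (h x) 1)^2 * D x)^2
        + energy_potential t x (smooth_cap (h x)))"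
    by (auto intro!: continuous_intros continuous_on_compose2[of UNIV smooth_cap])
  have "((\<lambda>x. smooth_cap (h x)) has_real_derivative 1 / (max (h x) 1)^2 * D x) (at x)"
    if "x \<in> {1..R}" for x
    using DERIV_chain2[OF smooth_cap_has_real_derivative deriv[OF that]] by (simp add: mult.commute)
  then have "energy t R (smooth_cap \<circ> h) = integral {1..R} (\<lambda>x. x^2 / 2 * (1 / (max (h x) 1)^2 * D x)^2
        + energy_potential t x (smooth_cap (h x)))"
    using energy_eq_integral by (simp add: comp_def)
  also have "\<dots> < integral {1..R} (\<lambda>x. x^2 / 2 * (D x)^2 + energy_potential t x (h x))"
    using cont assms(2,4) energy_integrand_smooth_cap[OF assms(1)] assms(5)
    by (intro integral_less_of_le_of_less_at[where c = r])
  also have "\<dots> = energy t R h"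
    by (rule energy_eq_integral[OF deriv, symmetric])
  finally show ?thesis .
qed

lemma minimizer_le_one:
  assumes "0 \<le> t" "1 < R" "is_minimizer t R h" "r \<in> {1..R}"
  shows "h r \<le> 1"
proof (rule ccontr)
  assume "\<not> h r \<le> 1"
  have "admissible R h" using assms(3) by (simp add: is_minimizer_def)
  then have "admissible R (smooth_cap \<circ> h)"
    by (simp add: admissible_def C1_differentiable_on_smooth_cap_compose smooth_cap_def)
  then have "energy t R h \<le> energy t R (smooth_cap \<circ> h)"
    using assms(3) by (simp add: is_minimizer_def)
  moreover have "energy t R (smooth_cap \<circ> h) < energy t R h"
    using energy_smooth_cap_less assms(1,2,4) \<open>admissible R h\<close> \<open>\<not> h r \<le> 1\<close> by simp
  ultimately show False by simp
qed

section \<open>Positivity of \<open>\<phi>\<close>\<close>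

lemma phi_fun_frame_ge:
  assumes "1/2 \<le> s" "s \<le> 1"
    and V: "V = v0 *\<^sub>R Emat \<theta> \<phi> + v1 *\<^sub>R Fmat \<theta> \<phi> + v2 *\<^sub>R Gmat \<theta> \<phi>
             + v3 *\<^sub>R Xmat \<theta> \<phi> + v4 *\<^sub>R Ymat \<theta> \<phi>"
  shows "(v0^2 / 6 + (v3^2 + v4^2) / 6 + (v1^2 + v2^2)^2) / 20
           \<le> phi_fun ((sqrt (3/2) * s) *\<^sub>R Emat \<theta> \<phi>) V v0 v3 v4"
proof -
  define r where "r = sqrt (v3^2 + v4^2) / sqrt 6"
  have "phi_fun ((sqrt (3/2) * s) *\<^sub>R Emat \<theta> \<phi>) V v0 v3 v4
      = reduced_phi s (v0 / sqrt 6) r (v1^2 + v2^2)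
        + 3 * sqrt 6 / 2 * (sqrt (v3^2 + v4^2) * (v1^2 + v2^2) - (v4 * (v1^2 - v2^2) + 2 * v1 * v2 * v3))"
    unfolding phi_fun_def mdot_scaleR_left frame_combination_invariants[OF V] r_def
    by (rule phi_coords_eq)
  moreover have "0 \<le> 3 * sqrt 6 / 2
      * (sqrt (v3^2 + v4^2) * (v1^2 + v2^2) - (v4 * (v1^2 - v2^2) + 2 * v1 * v2 * v3))"
    using cubic_coupling_le[of v4 v1 v2 v3] by simp
  moreover have "(v0^2 / 6 + (v3^2 + v4^2) / 6 + (v1^2 + v2^2)^2) / 20
      \<le> reduced_phi s (v0 / sqrt 6) r (v1^2 + v2^2)"
  proof -
    have squares: "(v0 / sqrt 6)^2 = v0^2 / 6" "r^2 = (v3^2 + v4^2) / 6"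
      by (simp_all add: r_def power_divide)
    have "0 \<le> r" by (simp add: r_def)
    from reduced_phi_ge[OF assms(1,2) this, of "v1^2 + v2^2" "v0 / sqrt 6"] show ?thesis
      unfolding squares by simp
  qed
  ultimately show ?thesis by linarith
qed

lemma phi_fun_frame_eq_0_iff:
  assumes "1/2 \<le> s" "s \<le> 1"
    and V: "V = v0 *\<^sub>R Emat \<theta> \<phi> + v1 *\<^sub>R Fmat \<theta> \<phi> + v2 *\<^sub>R Gmat \<theta> \<phi>
             + v3 *\<^sub>R Xmat \<theta> \<phi> + v4 *\<^sub>R Ymat \<theta> \<phi>"
  shows "phi_fun ((sqrt (3/2) * s) *\<^sub>R Emat \<theta> \<phi>) V v0 v3 v4 = 0 \<longleftrightarrow> V = 0"
proof
  assume "phi_fun ((sqrt (3/2) * s) *\<^sub>R Emat \<theta> \<phi>) V v0 v3 v4 = 0"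
  then have bound: "v0^2 / 6 + (v3^2 + v4^2) / 6 + (v1^2 + v2^2)^2 \<le> 0"
    using phi_fun_frame_ge[OF assms] by simp
  have "0 \<le> v0^2" "0 \<le> v3^2 + v4^2" "0 \<le> (v1^2 + v2^2)^2" by simp_all
  with bound have "v0^2 = 0 \<and> v3^2 + v4^2 = 0 \<and> (v1^2 + v2^2)^2 = 0"
    by argo
  then have "v0 = 0 \<and> v1 = 0 \<and> v2 = 0 \<and> v3 = 0 \<and> v4 = 0"
    by (simp add: sum_power2_eq_zero_iff)
  then show "V = 0" using V by simp
next
  assume "V = 0"
  then have "v0 = 0 \<and> v1 = 0 \<and> v2 = 0 \<and> v3 = 0 \<and> v4 = 0"
    using V frame_combination_eq_0_iff by simp
  with \<open>V = 0\<close> show "phi_fun ((sqrt (3/2) * s) *\<^sub>R Emat \<theta> \<phi>) V v0 v3 v4 = 0"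
    by (simp add: phi_fun_def mdot_def trace_def)
qed

theorem lemma5p5:
  shows "\<exists>hs::real. 0 < hs \<and> hs < 1 \<and>
    (\<forall>t R h. t \<ge> 0 \<longrightarrow> R > 1 \<longrightarrow> is_minimizer t R h \<longrightarrow>
       (\<forall>r\<in>{1..R}. h r \<ge> hs) \<longrightarrow>
       (\<forall>r \<theta> \<phi> V v0 v1 v2 v3 v4. 1 \<le> r \<longrightarrow> r \<le> R \<longrightarrow> V \<in> S0 \<longrightarrow>
          V = v0 *\<^sub>R Emat \<theta> \<phi> + v1 *\<^sub>R Fmat \<theta> \<phi> + v2 *\<^sub>R Gmat \<theta> \<phi>
              + v3 *\<^sub>R Xmat \<theta> \<phi> + v4 *\<^sub>R Ymat \<theta> \<phi> \<longrightarrow>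
          phi_fun (Hmat h r \<theta> \<phi>) V v0 v3 v4 \<ge> 0 \<and>
          (phi_fun (Hmat h r \<theta> \<phi>) V v0 v3 v4 = 0 \<longleftrightarrow> V = 0)))"
proof (intro exI[of _ "1/2"] conjI allI impI)
  fix t R h r \<theta> \<phi> V v0 v1 v2 v3 v4
  assume "0 \<le> t" "1 < R" "is_minimizer t R h" "\<forall>r\<in>{1..R}. 1/2 \<le> h r" "1 \<le> r" "r \<le> R"
    and V: "V = v0 *\<^sub>R Emat \<theta> \<phi> + v1 *\<^sub>R Fmat \<theta> \<phi> + v2 *\<^sub>R Gmat \<theta> \<phi>
             + v3 *\<^sub>R Xmat \<theta> \<phi> + v4 *\<^sub>R Ymat \<theta> \<phi>"
  then have s: "1/2 \<le> h r" "h r \<le> 1"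
    using minimizer_le_one by auto
  show "0 \<le> phi_fun (Hmat h r \<theta> \<phi>) V v0 v3 v4"
    unfolding Hmat_def by (rule order_trans[OF _ phi_fun_frame_ge[OF s V]]) simp
  show "phi_fun (Hmat h r \<theta> \<phi>) V v0 v3 v4 = 0 \<longleftrightarrow> V = 0"
    unfolding Hmat_def by (rule phi_fun_frame_eq_0_iff[OF s V])
qed simp_all

end
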